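(* Let $R$ be a commutative ring with ${\rm char}(R)\neq 2$ and $R_2\neq\{0\}$, and let $G$ be a non-abelian group with classical involution $*$ (the $R$-linear map on $RG$ with $g\mapsto g^{-1}$ for $g\in G$). Then $(RG)^-_*$ is commutative if and only if one of the following holds: \begin{enumerate} \item $G=K\rtimes\langle x\rangle$, where $K=\langle g\in G\mid g^2\neq 1\rangle$ is abelian, $x^2=1$, $xkx=k^{-1}$ for all $k\in K$, and $R_2^2=\{0\}$; \item ${\rm char}(R)=4$, $G$ has exponent $4$, $G'$ is cyclic of order $2$, $G/G'$ is an elementary abelian $2$-group, and, if $R_2^2\neq\{0\}$, elements of order $2$ in $G$ commute with each other. \end{enumerate}
   Context: $(RG)^-_*=\{\alpha\in RG\mid \alpha^*=-\alpha\}$; $R_2=\{r\in R\mid 2r=0\}$; $R_2^2=\{0\}$ means $r_1r_2=0$ for all $r_1,r_2\in R_2$. $G'$ is the commutator subgroup of $G$. *)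

theory Defs
  imports "HOL-Algebra.Algebra"
begin

definition grp_ring :: "('g, 'm) monoid_scheme \<Rightarrow> ('g \<Rightarrow> 'r::comm_ring_1) set" where
  "grp_ring G = {f. finite {g. f g \<noteq> 0} \<and> {g. f g \<noteq> 0} \<subseteq> carrier G}"

definition grp_ring_mult :: "('g, 'm) monoid_scheme \<Rightarrow> ('g \<Rightarrow> 'r::comm_ring_1) \<Rightarrow> ('g \<Rightarrow> 'r) \<Rightarrow> ('g \<Rightarrow> 'r)" where
  "grp_ring_mult G f h = (\<lambda>x. if x \<in> carrier G
      then (\<Sum>y\<in>{g. f g \<noteq> 0}. f y * h (inv\<^bsub>G\<^esub> y \<otimes>\<^bsub>G\<^esub> x)) else 0)"

definition grp_ring_star :: "('g, 'm) monoid_scheme \<Rightarrow> ('g \<Rightarrow> 'r::comm_ring_1) \<Rightarrow> ('g \<Rightarrow> 'r)" where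
  "grp_ring_star G f = (\<lambda>x. if x \<in> carrier G then f (inv\<^bsub>G\<^esub> x) else 0)"

definition grp_ring_skew :: "('g, 'm) monoid_scheme \<Rightarrow> ('g \<Rightarrow> 'r::comm_ring_1) set" where
  "grp_ring_skew G = {f \<in> grp_ring G. grp_ring_star G f = (\<lambda>x. - f x)}"

definition group_exponent :: "('g, 'm) monoid_scheme \<Rightarrow> nat \<Rightarrow> bool" where
  "group_exponent G n \<longleftrightarrow> 0 < n \<and> (\<forall>g\<in>carrier G. g [^]\<^bsub>G\<^esub> n = \<one>\<^bsub>G\<^esub>) \<and>
     (\<forall>m. 0 < m \<and> (\<forall>g\<in>carrier G. g [^]\<^bsub>G\<^esub> m = \<one>\<^bsub>G\<^esub>) \<longrightarrow> n \<le> m)"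

end

theory Submission
  imports Defs "HOL-Library.Disjoint_Sets"
begin

text \<open>
  Forward direction: comparing one coefficient of the two products of the skew elements
  \<open>g - g\<inverse>\<close> and \<open>s h\<close> (\<open>h\<close> an involution, \<open>s \<in> R\<^sub>2\<close>) gives three local rules: an involution
  centralises or inverts each non-involution; two non-commuting non-involutions force
  \<open>char R = 4\<close> and quaternion relations; involutions commute when \<open>R\<^sub>2\<^sup>2 \<noteq> 0\<close>. If the
  non-involutions commute, these yield (1); otherwise all non-involutions square to one central
  involution \<open>z\<close>, all commutators lie in \<open>{1, z}\<close>, and (2) follows.

  Backward direction: with \<open>(\<alpha>\<beta>)(x) = \<Sum>\<^sub>y \<alpha>(y)\<beta>(y\<inverse>x)\<close> and \<open>(\<beta>\<alpha>)(x) = \<Sum>\<^sub>y \<alpha>(y)\<beta>(xy\<inverse>)\<close>,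
  in case (1) the sums agree termwise after substituting \<open>y \<mapsto> y\<inverse>\<close> on \<open>K\<close>, and in case (2) their
  difference cancels over the pairs \<open>{y, yz}\<close>.
\<close>

definition skew_commutative :: "('g, 'm) monoid_scheme \<Rightarrow> 'r::comm_ring_1 itself \<Rightarrow> bool" where
  "skew_commutative G R \<longleftrightarrow> (\<forall>\<alpha> \<beta> :: 'g \<Rightarrow> 'r. \<alpha> \<in> grp_ring_skew G \<and> \<beta> \<in> grp_ring_skew G \<longrightarrow>
      grp_ring_mult G \<alpha> \<beta> = grp_ring_mult G \<beta> \<alpha>)"

definition non_involutions :: "('g, 'm) monoid_scheme \<Rightarrow> 'g set" where
  "non_involutions G = {g \<in> carrier G. g [^]\<^bsub>G\<^esub> (2::nat) \<noteq> \<one>\<^bsub>G\<^esub>}"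

definition semidirect_inversion_cond :: "('g, 'm) monoid_scheme \<Rightarrow> 'r::comm_ring_1 itself \<Rightarrow> bool" where
  "semidirect_inversion_cond G R \<longleftrightarrow>
     (let K = generate G (non_involutions G) in
        (\<forall>a\<in>K. \<forall>b\<in>K. a \<otimes>\<^bsub>G\<^esub> b = b \<otimes>\<^bsub>G\<^esub> a) \<and>
        (\<exists>x\<in>carrier G. x \<otimes>\<^bsub>G\<^esub> x = \<one>\<^bsub>G\<^esub> \<and>
           K \<lhd> G \<and>
           K \<inter> generate G {x} = {\<one>\<^bsub>G\<^esub>} \<and>
           K <#>\<^bsub>G\<^esub> generate G {x} = carrier G \<and>
           (\<forall>k\<in>K. x \<otimes>\<^bsub>G\<^esub> k \<otimes>\<^bsub>G\<^esub> x = inv\<^bsub>G\<^esub> k)) \<and>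
        (\<forall>r1 r2 :: 'r. 2 * r1 = 0 \<and> 2 * r2 = 0 \<longrightarrow> r1 * r2 = 0))"

definition char4_cond :: "('g, 'm) monoid_scheme \<Rightarrow> 'r::comm_ring_1 itself \<Rightarrow> bool" where
  "char4_cond G R \<longleftrightarrow>
     CHAR('r) = 4 \<and> group_exponent G 4 \<and>
      (\<exists>c\<in>carrier G. derived G (carrier G) = generate G {c}) \<and>
      card (derived G (carrier G)) = 2 \<and>
      (\<forall>a\<in>carrier (G Mod derived G (carrier G)).
          a \<otimes>\<^bsub>G Mod derived G (carrier G)\<^esub> a = \<one>\<^bsub>G Mod derived G (carrier G)\<^esub>) \<and>
      ((\<exists>r1 r2 :: 'r. 2 * r1 = 0 \<and> 2 * r2 = 0 \<and> r1 * r2 \<noteq> 0) \<longrightarrow>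
         (\<forall>a\<in>carrier G. \<forall>b\<in>carrier G. group.ord G a = 2 \<and> group.ord G b = 2 \<longrightarrow>
            a \<otimes>\<^bsub>G\<^esub> b = b \<otimes>\<^bsub>G\<^esub> a))"

lemma two_torsion_iff_self_negative: "2 * r = 0 \<longleftrightarrow> - r = (r::'r::comm_ring_1)"
  by (metis add_eq_0_iff2 mult_2 neg_equal_iff_equal)

lemma dvd_four_cases: "(n::nat) dvd 4 \<Longrightarrow> n = 1 \<or> n = 2 \<or> n = 4"
proof -
  assume "n dvd 4"
  then have "n \<le> 4" "n > 0"
    by (auto intro: dvd_imp_le intro!: Nat.gr0I)
  then have "n = 1 \<or> n = 2 \<or> n = 3 \<or> n = 4"
    by presburger
  then show ?thesis
    using \<open>n dvd 4\<close> by auto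
qed

lemma dvd_two_cases: "(n::nat) dvd 2 \<Longrightarrow> n = 1 \<or> n = 2"
  using two_is_prime_nat prime_nat_iff by blast

lemma small_numerals_in_ring:
  assumes char2: "CHAR('r::comm_ring_1) \<noteq> 2" and R2: "\<exists>r::'r. 2 * r = 0 \<and> r \<noteq> 0"
  shows "(1::'r) \<noteq> 0" "(2::'r) \<noteq> 0" "(3::'r) \<noteq> 0" "(4::'r) = 0 \<Longrightarrow> CHAR('r) = 4"
proof -
  obtain r :: 'r where r: "2 * r = 0" "r \<noteq> 0"
    using R2 by auto
  show one: "(1::'r) \<noteq> 0"
    using r by auto
  then have char1: "CHAR('r) \<noteq> 1"
    by (metis of_nat_CHAR of_nat_1)
  show "(2::'r) \<noteq> 0"
  proof
    assume "(2::'r) = 0"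
    then have "CHAR('r) dvd 2"
      by (metis of_nat_eq_0_iff_char_dvd of_nat_numeral)
    then show False
      using char1 char2 dvd_two_cases by blast
  qed
  show "(3::'r) \<noteq> 0"
  proof
    assume "(3::'r) = 0"
    have "r = 3 * r - 2 * r"
      by (simp add: left_diff_distrib[symmetric])
    then show False
      using \<open>3 = 0\<close> r by simp
  qed
  show "(4::'r) = 0 \<Longrightarrow> CHAR('r) = 4"
  proof -
    assume "(4::'r) = 0"
    then have "CHAR('r) dvd 4"
      by (metis of_nat_eq_0_iff_char_dvd of_nat_numeral)
    then show "CHAR('r) = 4"
      using char1 char2 dvd_four_cases by blast
  qed
qed

lemma indicator_relation_cases:
  assumes char2: "CHAR('r::comm_ring_1) \<noteq> 2" and R2: "\<exists>r::'r. 2 * r = 0 \<and> r \<noteq> 0"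
    and e: "(1::'r) + of_bool A = of_bool D - of_bool B - of_bool C"
  shows "(D \<and> \<not> A \<and> \<not> B \<and> \<not> C) \<or> (A \<and> B \<and> C \<and> \<not> D \<and> CHAR('r) = 4)"
proof -
  have "(1::'r) + of_bool A + of_bool B + of_bool C - of_bool D = 0"
    using e by (simp add: algebra_simps)
  then show ?thesis
    using small_numerals_in_ring[OF char2 R2]
    by (cases A; cases B; cases C; cases D) (simp_all add: algebra_simps)
qed

context group
begin

lemma inv_cancel_left [simp]: "x \<in> carrier G \<Longrightarrow> y \<in> carrier G \<Longrightarrow> inv x \<otimes> (x \<otimes> y) = y"
  by (simp add: m_assoc[symmetric])

lemma inv_cancel_left' [simp]: "x \<in> carrier G \<Longrightarrow> y \<in> carrier G \<Longrightarrow> x \<otimes> (inv x \<otimes> y) = y"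
  by (simp add: m_assoc[symmetric])

lemma non_involutions_iff: "g \<in> non_involutions G \<longleftrightarrow> g \<in> carrier G \<and> g \<otimes> g \<noteq> \<one>"
  by (auto simp: non_involutions_def numeral_2_eq_2)

lemma non_involutions_subset: "non_involutions G \<subseteq> carrier G"
  by (auto simp: non_involutions_iff)

lemma generate_centralised:
  assumes S: "S \<subseteq> carrier G" and c: "c \<in> carrier G" and comm: "\<forall>s\<in>S. s \<otimes> c = c \<otimes> s"
    and k: "k \<in> generate G S"
  shows "k \<otimes> c = c \<otimes> k"
  using k
proof (induction rule: generate.induct)
  case one
  then show ?case using c by simp
next
  case (incl h)
  then show ?case using comm by auto
next
  case (inv h)
  then have "h \<in> carrier G" "h \<otimes> c = c \<otimes> h"
    using S comm by auto
  then show ?case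
    using c by (simp add: inv_solve_left inv_solve_right m_assoc)
next
  case (eng h1 h2)
  then have "h1 \<in> carrier G" "h2 \<in> carrier G"
    using generate_in_carrier S by auto
  then show ?case
    using eng c by (metis m_assoc)
qed

lemma generate_abelian:
  assumes S: "S \<subseteq> carrier G" and comm: "\<forall>a\<in>S. \<forall>b\<in>S. a \<otimes> b = b \<otimes> a"
    and a: "a \<in> generate G S" and b: "b \<in> generate G S"
  shows "a \<otimes> b = b \<otimes> a"
proof -
  have "a \<in> carrier G"
    using a S generate_in_carrier by auto
  moreover have "\<forall>s\<in>S. s \<otimes> a = a \<otimes> s"
    using generate_centralised[OF S _ _ a] comm S by auto
  ultimately show ?thesis
    using generate_centralised[OF S _ _ b] by simp
qed

lemma generate_involution:
  assumes x: "x \<in> carrier G" "x \<otimes> x = \<one>"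
  shows "generate G {x} = {\<one>, x}"
proof
  have "subgroup {\<one>, x} G"
  proof (rule subgroupI)
    have "inv x = x"
      using x by (simp add: inv_equality)
    then show "\<And>a. a \<in> {\<one>, x} \<Longrightarrow> inv a \<in> {\<one>, x}"
      by auto
  qed (use x in auto)
  then show "generate G {x} \<subseteq> {\<one>, x}"
    by (rule generate_subgroup_incl[rotated]) simp
  show "{\<one>, x} \<subseteq> generate G {x}"
    by (auto intro: generate.one generate.incl)
qed

text \<open>A group in which every element is an involution is abelian; so a non-abelian group has
  non-involutions.\<close>

lemma non_involutions_nonempty:
  assumes "\<not> comm_group G"
  shows "non_involutions G \<noteq> {}"
proof
  assume none: "non_involutions G = {}"
  have "comm_group G"
  proof (rule group_comm_groupI)
    fix a b
    assume a: "a \<in> carrier G" and b: "b \<in> carrier G"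
    have sq: "u \<otimes> u = \<one>" if "u \<in> carrier G" for u
      using that none by (auto simp: non_involutions_iff)
    have "inv a = a" "inv b = b" "inv (a \<otimes> b) = a \<otimes> b"
      using a b sq by (simp_all add: inv_equality)
    then show "a \<otimes> b = b \<otimes> a"
      using a b by (metis inv_mult_group)
  qed
  then show False
    using assms by contradiction
qed

text \<open>Conjugation preserves squares, hence non-involutions; so the non-involutions generate a
  normal subgroup.\<close>

lemma conjugate_square:
  assumes "g \<in> carrier G" "h \<in> carrier G"
  shows "(g \<otimes> h \<otimes> inv g) \<otimes> (g \<otimes> h \<otimes> inv g) = g \<otimes> (h \<otimes> h) \<otimes> inv g"
  using assms by (simp add: m_assoc)

lemma conjugate_non_involution:
  assumes h: "h \<in> non_involutions G" and g: "g \<in> carrier G"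
  shows "g \<otimes> h \<otimes> inv g \<in> non_involutions G"
proof -
  have hc: "h \<in> carrier G" "h \<otimes> h \<noteq> \<one>"
    using h by (auto simp: non_involutions_iff)
  have "g \<otimes> (h \<otimes> h) \<otimes> inv g \<noteq> \<one>"
  proof
    assume "g \<otimes> (h \<otimes> h) \<otimes> inv g = \<one>"
    then have "inv g \<otimes> (g \<otimes> (h \<otimes> h) \<otimes> inv g) \<otimes> g = \<one>"
      using g by simp
    then show False
      using hc g by (simp add: m_assoc)
  qed
  then show ?thesis
    using conjugate_square[OF g hc(1)] hc g by (simp add: non_involutions_iff)
qed

lemma non_involutions_generate_normal: "generate G (non_involutions G) \<lhd> G"
  using non_involutions_subset conjugate_non_involution by (rule normal_generateI)

lemma commute_inv:
  assumes "x \<in> carrier G" "y \<in> carrier G" "x \<otimes> y = y \<otimes> x"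
  shows "inv x \<otimes> y = y \<otimes> inv x"
  using assms by (simp add: inv_solve_left inv_solve_right m_assoc)

lemma commutator_eq_one_iff:
  assumes "a \<in> carrier G" "b \<in> carrier G"
  shows "a \<otimes> b \<otimes> inv a \<otimes> inv b = \<one> \<longleftrightarrow> a \<otimes> b = b \<otimes> a"
  using assms by (metis inv_closed inv_mult_group inv_solve_right m_closed r_inv)

lemma commutator_via_squares:
  assumes a: "a \<in> carrier G" and b: "b \<in> carrier G"
    and central: "b \<otimes> (a \<otimes> a) = (a \<otimes> a) \<otimes> b"
  shows "a \<otimes> b \<otimes> inv a \<otimes> inv b = (a \<otimes> b) \<otimes> (a \<otimes> b) \<otimes> inv (a \<otimes> a) \<otimes> inv (b \<otimes> b)"
proof -
  have "inv a = a \<otimes> inv (a \<otimes> a)" "inv b = b \<otimes> inv (b \<otimes> b)"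
    using a b by (simp_all add: inv_mult_group m_assoc)
  moreover have "inv (a \<otimes> a) \<otimes> b = b \<otimes> inv (a \<otimes> a)"
    using commute_inv[OF _ b] central a by simp
  ultimately show ?thesis
    using a b by (simp add: m_assoc) (metis inv_closed m_assoc m_closed)
qed

lemma ord_two_iff:
  assumes u: "u \<in> carrier G"
  shows "ord u = 2 \<longleftrightarrow> u \<otimes> u = \<one> \<and> u \<noteq> \<one>"
proof -
  have "u \<otimes> u = \<one> \<longleftrightarrow> ord u dvd 2"
    using pow_eq_id[OF u, of 2] u by (simp add: numeral_2_eq_2)
  then show ?thesis
    using ord_eq_1[OF u] dvd_two_cases by auto
qed

lemma group_exponent_fourI:
  assumes four: "\<forall>u\<in>carrier G. u \<otimes> u \<otimes> (u \<otimes> u) = \<one>" and g: "g \<in> carrier G" "g \<otimes> g \<noteq> \<one>"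
  shows "group_exponent G 4"
proof -
  have pow4: "u [^] (4::nat) = u \<otimes> u \<otimes> (u \<otimes> u)" if "u \<in> carrier G" for u
    using that by (simp add: numeral_eq_Suc m_assoc)
  have "ord g dvd 4"
    using four g pow4 pow_eq_id by metis
  moreover have "ord g \<noteq> 1" "ord g \<noteq> 2"
    using g ord_eq_1 ord_two_iff by auto
  ultimately have ord4: "ord g = 4"
    using dvd_four_cases by blast
  show ?thesis
    unfolding group_exponent_def
  proof (intro conjI allI impI ballI)
    show "\<And>u. u \<in> carrier G \<Longrightarrow> u [^] (4::nat) = \<one>"
      using four pow4 by simp
    fix m :: nat
    assume m: "0 < m \<and> (\<forall>u\<in>carrier G. u [^] m = \<one>)"
    then have "ord g dvd m"
      using g pow_eq_id by blast
    then show "4 \<le> m"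
      using m ord4 by (metis dvd_imp_le)
  qed simp
qed

lemma quotient_exponent_two_iff:
  assumes N: "N \<lhd> G"
  shows "(\<forall>a\<in>carrier (G Mod N). a \<otimes>\<^bsub>G Mod N\<^esub> a = \<one>\<^bsub>G Mod N\<^esub>) \<longleftrightarrow> (\<forall>u\<in>carrier G. u \<otimes> u \<in> N)"
proof -
  have Nsg: "subgroup N G"
    using N by (rule normal_imp_subgroup)
  have coset_sq: "(N #> u) <#> (N #> u) = N #> (u \<otimes> u)" if "u \<in> carrier G" for u
    using normal.rcos_sum[OF N that that] .
  have coset_eq: "N #> (u \<otimes> u) = N \<longleftrightarrow> u \<otimes> u \<in> N" if u: "u \<in> carrier G" for u
  proof
    assume "N #> (u \<otimes> u) = N"
    then show "u \<otimes> u \<in> N"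
      using rcos_self[OF _ Nsg, of "u \<otimes> u"] u by simp
  next
    assume "u \<otimes> u \<in> N"
    then show "N #> (u \<otimes> u) = N"
      using subgroup.rcos_const[OF Nsg is_group] by blast
  qed
  show ?thesis
    using coset_sq coset_eq unfolding carrier_FactGroup by (auto simp: RCOSETS_def)
qed

lemma commutator_in_derived:
  "a \<in> carrier G \<Longrightarrow> b \<in> carrier G \<Longrightarrow> a \<otimes> b \<otimes> inv a \<otimes> inv b \<in> derived G (carrier G)"
  unfolding derived_def by (rule generate.incl) blast

lemma involution_coset_cover:
  assumes K: "K \<subseteq> carrier G" and x: "x \<in> carrier G" "x \<otimes> x = \<one>"
    and outside: "\<And>y. y \<in> carrier G \<Longrightarrow> y \<notin> K \<Longrightarrow> y \<otimes> x \<in> K"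
  shows "K <#> {\<one>, x} = carrier G"
proof
  show "K <#> {\<one>, x} \<subseteq> carrier G"
    using K x by (auto simp: set_mult_def)
  show "carrier G \<subseteq> K <#> {\<one>, x}"
  proof
    fix y
    assume y: "y \<in> carrier G"
    show "y \<in> K <#> {\<one>, x}"
    proof (cases "y \<in> K")
      case True
      then show ?thesis
        using y unfolding set_mult_def by (metis insertI1 r_one UN_iff)
    next
      case False
      then have "y \<otimes> x \<in> K" "y = (y \<otimes> x) \<otimes> x"
        using outside y x by (simp_all add: m_assoc)
      then show ?thesis
        unfolding set_mult_def by blast
    qed
  qed
qed

lemma normal_order_two:
  assumes N: "N \<lhd> G" and card: "card N = 2" and c: "c \<in> N" "c \<noteq> \<one>"
  shows "N = {\<one>, c}" "c \<otimes> c = \<one>" "\<And>u. u \<in> carrier G \<Longrightarrow> u \<otimes> c = c \<otimes> u"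
proof -
  have Nsg: "subgroup N G"
    using N by (rule normal_imp_subgroup)
  have cc: "c \<in> carrier G"
    using c subgroup.mem_carrier[OF Nsg] by blast
  show N2: "N = {\<one>, c}"
  proof (rule card_subset_eq[symmetric])
    show "finite N"
      using card by (intro card_ge_0_finite) simp
    show "{\<one>, c} \<subseteq> N"
      using c subgroup.one_closed[OF Nsg] by blast
    show "card {\<one>, c} = card N"
      using card c by simp
  qed
  have "c \<otimes> c \<in> N" "c \<otimes> c \<noteq> c"
    using subgroup.m_closed[OF Nsg c(1) c(1)] cc c(2) by simp_all
  then show "c \<otimes> c = \<one>"
    using N2 by blast
  fix u
  assume u: "u \<in> carrier G"
  have "u \<otimes> c \<otimes> inv u \<in> N"
    using N u c(1) normal_inv_iff by blast
  moreover have "u \<otimes> c \<otimes> inv u \<noteq> \<one>"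
  proof
    assume "u \<otimes> c \<otimes> inv u = \<one>"
    then have "inv u \<otimes> (u \<otimes> c \<otimes> inv u) \<otimes> u = \<one>"
      using u by simp
    then show False
      using u cc c(2) by (simp add: m_assoc)
  qed
  ultimately have "u \<otimes> c \<otimes> inv u = c"
    using N2 by blast
  then show "u \<otimes> c = c \<otimes> u"
    using u cc by (metis inv_solve_right m_closed)
qed

text \<open>Convolution in \<open>RG\<close>: \<open>(\<alpha>\<beta>)(x) = \<Sum>\<^sub>y \<alpha>(y)\<beta>(y\<inverse>x)\<close> may be summed over any finite set
  containing the support of \<open>\<alpha>\<close>, and the product in the other order is
  \<open>(\<beta>\<alpha>)(x) = \<Sum>\<^sub>y \<alpha>(y)\<beta>(xy\<inverse>)\<close> (substitute \<open>y \<mapsto> xy\<inverse>\<close>).\<close>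

lemma grp_ring_mult_eq_sum:
  assumes "finite S" "{g. f g \<noteq> 0} \<subseteq> S" "x \<in> carrier G"
  shows "grp_ring_mult G f h x = (\<Sum>y\<in>S. f y * h (inv y \<otimes> x))"
proof -
  have "(\<Sum>y\<in>{g. f g \<noteq> 0}. f y * h (inv y \<otimes> x)) = (\<Sum>y\<in>S. f y * h (inv y \<otimes> x))"
    by (rule sum.mono_neutral_left) (use assms in auto)
  then show ?thesis
    using assms(3) by (simp add: grp_ring_mult_def)
qed

lemma grp_ring_mult_swapped:
  fixes \<alpha> \<beta> :: "'a \<Rightarrow> 'r::comm_ring_1"
  assumes \<alpha>: "\<alpha> \<in> grp_ring G" and \<beta>: "\<beta> \<in> grp_ring G" and x: "x \<in> carrier G"
  shows "grp_ring_mult G \<beta> \<alpha> x = (\<Sum>w\<in>{g. \<alpha> g \<noteq> 0}. \<alpha> w * \<beta> (x \<otimes> inv w))"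
proof -
  let ?A = "{g. \<alpha> g \<noteq> 0}" and ?B = "{g. \<beta> g \<noteq> 0}"
  have A: "finite ?A" "?A \<subseteq> carrier G" and B: "finite ?B" "?B \<subseteq> carrier G"
    using \<alpha> \<beta> by (auto simp: grp_ring_def)
  have undo_j: "x \<otimes> inv (inv y \<otimes> x) = y" if "y \<in> carrier G" for y
    using that x by (simp add: inv_mult_group m_assoc[symmetric])
  have undo_i: "inv (x \<otimes> inv w) \<otimes> x = w" if "w \<in> carrier G" for w
    using that x by (simp add: inv_mult_group m_assoc)
  have "(\<Sum>y\<in>?B. \<beta> y * \<alpha> (inv y \<otimes> x)) = (\<Sum>w\<in>?A. \<alpha> w * \<beta> (x \<otimes> inv w))"
    by (rule sum.reindex_bij_witness_not_neutral
        [where S' = "{y\<in>?B. \<alpha> (inv y \<otimes> x) = 0}" and T' = "{w\<in>?A. \<beta> (x \<otimes> inv w) = 0}"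
          and j = "\<lambda>y. inv y \<otimes> x" and i = "\<lambda>w. x \<otimes> inv w"])
      (use A B undo_j undo_i in \<open>auto simp: mult.commute\<close>)
  then show ?thesis
    using x by (simp add: grp_ring_mult_def)
qed

lemma skew_in_grp_ring: "\<alpha> \<in> grp_ring_skew G \<Longrightarrow> \<alpha> \<in> grp_ring G"
  by (simp add: grp_ring_skew_def)

lemma skew_inv:
  fixes \<alpha> :: "'a \<Rightarrow> 'r::comm_ring_1"
  assumes "\<alpha> \<in> grp_ring_skew G" "u \<in> carrier G"
  shows "\<alpha> (inv u) = - \<alpha> u"
  using assms fun_cong[of "grp_ring_star G \<alpha>" "\<lambda>x. - \<alpha> x" u]
  unfolding grp_ring_skew_def grp_ring_star_def by auto

lemma skew_at_involution:
  fixes \<alpha> :: "'a \<Rightarrow> 'r::comm_ring_1"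
  assumes "\<alpha> \<in> grp_ring_skew G" "u \<in> carrier G" "u \<otimes> u = \<one>"
  shows "2 * \<alpha> u = 0"
proof -
  have "inv u = u"
    using assms(2,3) by (simp add: inv_equality)
  then show ?thesis
    using skew_inv[OF assms(1,2)] two_torsion_iff_self_negative by metis
qed

text \<open>The two families of skew elements used to test commutativity: \<open>g - g\<inverse>\<close> for any \<open>g\<close>, and
  \<open>s a\<close> for an involution \<open>a\<close> and \<open>s \<in> R\<^sub>2\<close>.\<close>

definition antisym_elem :: "'a \<Rightarrow> 'a \<Rightarrow> 'r::comm_ring_1" where
  "antisym_elem g x = of_bool (x = g) - of_bool (x = inv g)"

definition monomial_elem :: "'r::comm_ring_1 \<Rightarrow> 'a \<Rightarrow> 'a \<Rightarrow> 'r" where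
  "monomial_elem s a x = (if x = a then s else 0)"

lemma antisym_elem_skew:
  "g \<in> carrier G \<Longrightarrow> (antisym_elem g :: 'a \<Rightarrow> 'r::comm_ring_1) \<in> grp_ring_skew G"
  unfolding grp_ring_skew_def grp_ring_def grp_ring_star_def antisym_elem_def
  by (auto simp: fun_eq_iff intro: finite_subset[of _ "{g, inv g}"])

lemma monomial_elem_skew:
  assumes "a \<in> carrier G" "a \<otimes> a = \<one>" "2 * s = (0::'r::comm_ring_1)"
  shows "monomial_elem s a \<in> grp_ring_skew G"
proof -
  have "inv a = a"
    using assms(1,2) by (simp add: inv_equality)
  moreover have "- s = s"
    using assms(3) two_torsion_iff_self_negative by blast
  ultimately show ?thesis
    using assms(1) unfolding grp_ring_skew_def grp_ring_def grp_ring_star_def monomial_elem_def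
    by (auto simp: fun_eq_iff intro: finite_subset[of _ "{a}"])
qed

lemma mult_antisym_elem:
  assumes "g \<in> carrier G" "g \<otimes> g \<noteq> \<one>" "x \<in> carrier G"
  shows "grp_ring_mult G (antisym_elem g) \<beta> x = \<beta> (inv g \<otimes> x) - (\<beta> (g \<otimes> x) :: 'r::comm_ring_1)"
proof -
  have "g \<noteq> inv g"
    using assms(1,2) by (metis r_inv)
  moreover have "grp_ring_mult G (antisym_elem g) \<beta> x = (\<Sum>y\<in>{g, inv g}. antisym_elem g y * \<beta> (inv y \<otimes> x))"
    by (rule grp_ring_mult_eq_sum) (auto simp: antisym_elem_def assms(3))
  ultimately show ?thesis
    using assms(1) by (simp add: antisym_elem_def)
qed

lemma mult_monomial_elem:
  assumes "x \<in> carrier G"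
  shows "grp_ring_mult G (monomial_elem s a) \<beta> x = s * (\<beta> (inv a \<otimes> x) :: 'r::comm_ring_1)"
proof -
  have "grp_ring_mult G (monomial_elem s a) \<beta> x = (\<Sum>y\<in>{a}. monomial_elem s a y * \<beta> (inv y \<otimes> x))"
    by (rule grp_ring_mult_eq_sum) (auto simp: monomial_elem_def assms)
  then show ?thesis
    by (simp add: monomial_elem_def)
qed

text \<open>An involution \<open>h\<close> either centralises or inverts a non-involution \<open>g\<close>: compare the
  coefficients of \<open>gh\<close> in \<open>(g - g\<inverse>)(s h)\<close> and \<open>(s h)(g - g\<inverse>)\<close> for some \<open>0 \<noteq> s \<in> R\<^sub>2\<close>.\<close>

lemma involution_centralises_or_inverts:
  fixes R :: "'r::comm_ring_1 itself"
  assumes sc: "skew_commutative G R" and R2: "\<exists>r::'r. 2 * r = 0 \<and> r \<noteq> 0"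
    and g: "g \<in> carrier G" "g \<otimes> g \<noteq> \<one>" and h: "h \<in> carrier G" "h \<otimes> h = \<one>"
  shows "g \<otimes> h = h \<otimes> g \<or> h \<otimes> g \<otimes> h = inv g"
proof (rule ccontr)
  assume nc: "\<not> (g \<otimes> h = h \<otimes> g \<or> h \<otimes> g \<otimes> h = inv g)"
  obtain s :: 'r where s: "2 * s = 0" "s \<noteq> 0"
    using R2 by auto
  have ih: "inv h = h"
    using h by (simp add: inv_equality)
  have gh: "g \<otimes> h \<in> carrier G"
    using g h by simp
  have "grp_ring_mult G (antisym_elem g) (monomial_elem s h) = grp_ring_mult G (monomial_elem s h) (antisym_elem g)"
    using sc antisym_elem_skew[OF g(1)] monomial_elem_skew[OF h s(1)] unfolding skew_commutative_def by blast
  moreover have "grp_ring_mult G (antisym_elem g) (monomial_elem s h) (g \<otimes> h) = s"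
  proof -
    have "inv g \<otimes> (g \<otimes> h) = h" "g \<otimes> (g \<otimes> h) \<noteq> h"
      using g h by (simp_all add: m_assoc[symmetric])
    then show ?thesis
      using mult_antisym_elem[OF g gh, of "monomial_elem s h"] by (simp add: monomial_elem_def)
  qed
  moreover have "grp_ring_mult G (monomial_elem s h) (antisym_elem g) (g \<otimes> h) = 0"
  proof -
    have "inv h \<otimes> (g \<otimes> h) \<noteq> g"
      using nc g h ih by (metis inv_solve_left m_closed)
    moreover have "inv h \<otimes> (g \<otimes> h) \<noteq> inv g"
      using nc g h ih by (metis m_assoc)
    ultimately show ?thesis
      using mult_monomial_elem[OF gh, of s h "antisym_elem g"] by (simp add: antisym_elem_def)
  qed
  ultimately show False
    using s(2) by simp
qed

text \<open>If \<open>R\<^sub>2\<^sup>2 \<noteq> 0\<close>, any two involutions commute: compare the coefficients of \<open>ab\<close> in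
  \<open>(s\<^sub>1 a)(s\<^sub>2 b)\<close> and \<open>(s\<^sub>2 b)(s\<^sub>1 a)\<close>.\<close>

lemma involutions_commute:
  fixes R :: "'r::comm_ring_1 itself"
  assumes sc: "skew_commutative G R" and s: "2 * s1 = 0" "2 * s2 = 0" "s1 * s2 \<noteq> (0::'r)"
    and a: "a \<in> carrier G" "a \<otimes> a = \<one>" and b: "b \<in> carrier G" "b \<otimes> b = \<one>"
  shows "a \<otimes> b = b \<otimes> a"
proof (rule ccontr)
  assume nc: "a \<otimes> b \<noteq> b \<otimes> a"
  have ab: "a \<otimes> b \<in> carrier G"
    using a b by simp
  have eq: "grp_ring_mult G (monomial_elem s1 a) (monomial_elem s2 b) = grp_ring_mult G (monomial_elem s2 b) (monomial_elem s1 a)"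
    using sc monomial_elem_skew[OF a s(1)] monomial_elem_skew[OF b s(2)] unfolding skew_commutative_def by blast
  have "inv a \<otimes> (a \<otimes> b) = b"
    using a b by (simp add: m_assoc[symmetric])
  moreover have "inv b \<otimes> (a \<otimes> b) \<noteq> a"
    using a b nc by (metis inv_solve_left m_closed)
  ultimately have "s1 * s2 = 0"
    using fun_cong[OF eq, of "a \<otimes> b"] mult_monomial_elem[OF ab, of s1 a] mult_monomial_elem[OF ab, of s2 b]
    by (simp add: monomial_elem_def)
  then show False
    using s(3) by simp
qed

text \<open>Two non-commuting non-involutions \<open>g, h\<close>: comparing the coefficients of \<open>gh\<close> in
  \<open>(g - g\<inverse>)(h - h\<inverse>)\<close> and \<open>(h - h\<inverse>)(g - g\<inverse>)\<close> forces characteristic 4 and the quaternion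
  relations \<open>h\<inverse>gh = g\<inverse>\<close>, \<open>h\<^sup>2 = g\<^sup>2\<close>, \<open>g\<^sup>4 = 1\<close>.\<close>

lemma noncommuting_non_involutions:
  fixes R :: "'r::comm_ring_1 itself"
  assumes sc: "skew_commutative G R" and char2: "CHAR('r) \<noteq> 2" and R2: "\<exists>r::'r. 2 * r = 0 \<and> r \<noteq> 0"
    and g: "g \<in> carrier G" "g \<otimes> g \<noteq> \<one>" and h: "h \<in> carrier G" "h \<otimes> h \<noteq> \<one>"
    and nc: "g \<otimes> h \<noteq> h \<otimes> g"
  shows "CHAR('r) = 4 \<and> inv h \<otimes> (g \<otimes> h) = inv g \<and> h \<otimes> h = g \<otimes> g \<and> g \<otimes> g \<otimes> (g \<otimes> g) = \<one>"
proof -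
  have eq: "grp_ring_mult G (antisym_elem g) (antisym_elem h) = (grp_ring_mult G (antisym_elem h) (antisym_elem g) :: 'a \<Rightarrow> 'r)"
    using sc antisym_elem_skew[OF g(1)] antisym_elem_skew[OF h(1)] unfolding skew_commutative_def by blast
  have gh: "g \<otimes> h \<in> carrier G"
    using g h by simp
  have "inv g \<otimes> (g \<otimes> h) = h" "g \<otimes> (g \<otimes> h) \<noteq> h" "h \<noteq> inv h"
    using g h by (simp_all add: m_assoc[symmetric]) (metis r_inv)
  then have left: "grp_ring_mult G (antisym_elem g) (antisym_elem h) (g \<otimes> h) =
      (1 + of_bool (g \<otimes> (g \<otimes> h) = inv h) :: 'r)"
    using mult_antisym_elem[OF g gh, of "antisym_elem h"] by (simp add: antisym_elem_def)
  have "inv h \<otimes> (g \<otimes> h) \<noteq> g"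
    using nc g h by (metis inv_solve_left m_closed)
  then have right: "grp_ring_mult G (antisym_elem h) (antisym_elem g) (g \<otimes> h) =
      (of_bool (h \<otimes> (g \<otimes> h) = inv g) - of_bool (inv h \<otimes> (g \<otimes> h) = inv g)
        - of_bool (h \<otimes> (g \<otimes> h) = g) :: 'r)"
    using mult_antisym_elem[OF h gh, of "antisym_elem g"] by (simp add: antisym_elem_def algebra_simps)
  have hgh: "h \<otimes> (g \<otimes> h) \<noteq> inv g"
  proof
    txt \<open>Otherwise \<open>a = gh\<close> is an involution; it cannot centralise \<open>g\<close>, so it inverts \<open>g\<close>,
      and then \<open>h = g\<inverse>a\<close> would be an involution.\<close>
    assume "h \<otimes> (g \<otimes> h) = inv g"
    define a where "a = g \<otimes> h"
    have a: "a \<in> carrier G" "a \<otimes> a = \<one>"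
      using gh \<open>h \<otimes> (g \<otimes> h) = inv g\<close> g h by (simp_all add: a_def m_assoc)
    have "g \<otimes> a \<noteq> a \<otimes> g"
      using nc g h by (simp add: a_def m_assoc)
    then have "a \<otimes> g \<otimes> a = inv g"
      using involution_centralises_or_inverts[OF sc R2 g a] by blast
    then have "inv (a \<otimes> g \<otimes> a) = g"
      using g by simp
    moreover have "inv a = a"
      using a by (simp add: inv_equality)
    ultimately have "a \<otimes> inv g \<otimes> a = g"
      using a g by (simp add: inv_mult_group m_assoc)
    then have "inv g \<otimes> (a \<otimes> inv g \<otimes> a) = \<one>"
      using g by simp
    then have "h \<otimes> h = \<one>"
      using g h by (simp add: a_def m_assoc)
    then show False
      using h(2) by contradiction
  qed
  have "(1::'r) + of_bool (g \<otimes> (g \<otimes> h) = inv h) = of_bool (h \<otimes> (g \<otimes> h) = inv g)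
      - of_bool (inv h \<otimes> (g \<otimes> h) = inv g) - of_bool (h \<otimes> (g \<otimes> h) = g)"
    using fun_cong[OF eq, of "g \<otimes> h"] left right by simp
  then have ggh: "g \<otimes> (g \<otimes> h) = inv h" and conj: "inv h \<otimes> (g \<otimes> h) = inv g"
    and hgh': "h \<otimes> (g \<otimes> h) = g" and char4: "CHAR('r) = 4"
    using indicator_relation_cases[OF char2 R2] hgh by blast+
  have hh: "h \<otimes> h = g \<otimes> g"
    using hgh' conj g h by (metis inv_solve_left' m_assoc m_closed)
  moreover have "g \<otimes> g \<otimes> (g \<otimes> g) = \<one>"
    using ggh hh g h by (metis l_inv m_assoc m_closed)
  ultimately show ?thesis
    using conj char4 by simp
qed

text \<open>Forward direction when the non-involutions commute pairwise, so that
  \<open>K = \<langle>non-involutions\<rangle>\<close> is abelian. Every element \<open>u \<notin> K\<close> is an involution, and since it cannot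
  centralise a non-involution \<open>n\<close> (else \<open>un \<in> K\<close>, so \<open>u \<in> K\<close>), it inverts all of \<open>K\<close>.\<close>

lemma outside_element_inverts:
  fixes R :: "'r::comm_ring_1 itself"
  assumes sc: "skew_commutative G R" and R2: "\<exists>r::'r. 2 * r = 0 \<and> r \<noteq> 0"
    and abelN: "\<forall>a\<in>non_involutions G. \<forall>b\<in>non_involutions G. a \<otimes> b = b \<otimes> a"
    and u: "u \<in> carrier G" "u \<notin> generate G (non_involutions G)"
  shows "u \<otimes> u = \<one>" "\<forall>k\<in>generate G (non_involutions G). u \<otimes> k \<otimes> u = inv k"
proof -
  let ?K = "generate G (non_involutions G)"
  show uu: "u \<otimes> u = \<one>"
    using u generate.incl[of u "non_involutions G" G] by (auto simp: non_involutions_iff)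
  have inverts_generator: "u \<otimes> n \<otimes> u = inv n" if n: "n \<in> non_involutions G" for n
  proof -
    have nc: "n \<in> carrier G" "n \<otimes> n \<noteq> \<one>"
      using n by (auto simp: non_involutions_iff)
    have "n \<otimes> u \<noteq> u \<otimes> n"
    proof
      assume c: "n \<otimes> u = u \<otimes> n"
      have "(u \<otimes> n) \<otimes> (u \<otimes> n) = n \<otimes> n"
        using c nc u uu by (metis l_one m_assoc m_closed)
      then have "u \<otimes> n \<in> ?K"
        using nc u by (auto simp: non_involutions_iff intro: generate.incl)
      then have "(u \<otimes> n) \<otimes> inv n \<in> ?K"
        using generate.inv[OF n] by (rule generate.eng)
      then show False
        using nc u by (simp add: m_assoc)
    qed
    then show ?thesis
      using involution_centralises_or_inverts[OF sc R2 nc u(1) uu] by simp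
  qed
  have Kab: "a \<otimes> b = b \<otimes> a" if "a \<in> ?K" "b \<in> ?K" for a b
    using generate_abelian[OF non_involutions_subset abelN that] .
  show "\<forall>k\<in>?K. u \<otimes> k \<otimes> u = inv k"
  proof
    fix k
    assume "k \<in> ?K"
    then show "u \<otimes> k \<otimes> u = inv k"
    proof (induction rule: generate.induct)
      case one
      then show ?case using u uu by simp
    next
      case (incl h)
      then show ?case using inverts_generator by simp
    next
      case (inv h)
      then have "h \<in> carrier G" "u \<otimes> h \<otimes> u = inv h"
        using inverts_generator by (auto simp: non_involutions_iff)
      then show ?case
        using u uu by (metis conjugation_is_surj inv_inv local.inv_equality)
    next
      case (eng h1 h2)
      then have "h1 \<in> carrier G" "h2 \<in> carrier G" "h1 \<otimes> h2 = h2 \<otimes> h1"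
        using generate_in_carrier non_involutions_subset Kab by auto
      then show ?case
        using eng u uu by (metis inv_mult_group m_assoc m_closed r_cancel_one')
    qed
  qed
qed

text \<open>\<open>K\<close> has index 2: the product of two elements outside \<open>K\<close> lies in \<open>K\<close>, for otherwise
  \<open>y\<close>, \<open>x\<close> and \<open>yx\<close> would all invert a non-involution \<open>n\<close>, forcing \<open>n = n\<inverse>\<close>.\<close>

lemma outside_product_inside:
  fixes R :: "'r::comm_ring_1 itself"
  assumes sc: "skew_commutative G R" and R2: "\<exists>r::'r. 2 * r = 0 \<and> r \<noteq> 0"
    and abelN: "\<forall>a\<in>non_involutions G. \<forall>b\<in>non_involutions G. a \<otimes> b = b \<otimes> a"
    and n: "n \<in> non_involutions G"
    and x: "x \<in> carrier G" "x \<notin> generate G (non_involutions G)"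
    and y: "y \<in> carrier G" "y \<notin> generate G (non_involutions G)"
  shows "y \<otimes> x \<in> generate G (non_involutions G)"
proof (rule ccontr)
  let ?K = "generate G (non_involutions G)"
  assume yx: "y \<otimes> x \<notin> ?K"
  have nK: "n \<in> ?K" and nc: "n \<in> carrier G" "n \<otimes> n \<noteq> \<one>"
    using n by (auto simp: non_involutions_iff intro: generate.incl)
  note xo = outside_element_inverts[OF sc R2 abelN x] and yo = outside_element_inverts[OF sc R2 abelN y]
    and yxo = outside_element_inverts[OF sc R2 abelN _ yx]
  have "y \<otimes> n \<otimes> y = inv n" "x \<otimes> n \<otimes> x = inv n" "(y \<otimes> x) \<otimes> n \<otimes> (y \<otimes> x) = inv n"
    "(y \<otimes> x) \<otimes> (y \<otimes> x) = \<one>"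
    using xo yo yxo x y nK by auto
  then show False
    using yo(1) xo(1) y x nc by (metis inv_solve_left l_inv m_assoc m_closed)
qed

text \<open>An involution inverting a non-involution \<open>n\<close> does not commute with the involution \<open>xn\<close>;
  hence \<open>R\<^sub>2\<^sup>2 = 0\<close>.\<close>

lemma R2_square_zero:
  fixes R :: "'r::comm_ring_1 itself"
  assumes sc: "skew_commutative G R"
    and x: "x \<in> carrier G" "x \<otimes> x = \<one>" and n: "n \<in> carrier G" "n \<otimes> n \<noteq> \<one>"
    and xnx: "x \<otimes> n \<otimes> x = inv n"
  shows "\<forall>r1 r2 :: 'r. 2 * r1 = 0 \<and> 2 * r2 = 0 \<longrightarrow> r1 * r2 = 0"
proof (intro allI impI, rule ccontr)
  fix r1 r2 :: 'r
  assume r: "2 * r1 = 0 \<and> 2 * r2 = 0" and nz: "r1 * r2 \<noteq> 0"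
  have xn: "x \<otimes> n \<in> carrier G" "(x \<otimes> n) \<otimes> (x \<otimes> n) = \<one>"
    using xnx x n by (simp_all add: m_assoc[symmetric])
  have "x \<otimes> (x \<otimes> n) = (x \<otimes> n) \<otimes> x"
    using involutions_commute[OF sc _ _ nz x xn] r by auto
  then show False
    using xnx x n by (metis l_one m_assoc r_inv)
qed

lemma semidirect_forward:
  fixes R :: "'r::comm_ring_1 itself"
  assumes sc: "skew_commutative G R" and R2: "\<exists>r::'r. 2 * r = 0 \<and> r \<noteq> 0"
    and nonab: "\<not> comm_group G"
    and abelN: "\<forall>a\<in>non_involutions G. \<forall>b\<in>non_involutions G. a \<otimes> b = b \<otimes> a"
  shows "semidirect_inversion_cond G R"
proof -
  let ?K = "generate G (non_involutions G)"
  have Kab: "\<forall>a\<in>?K. \<forall>b\<in>?K. a \<otimes> b = b \<otimes> a"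
    using generate_abelian[OF non_involutions_subset abelN] by blast
  have Ksub: "?K \<subseteq> carrier G"
    by (rule generate_incl[OF non_involutions_subset])
  obtain x where x: "x \<in> carrier G" "x \<notin> ?K"
  proof -
    have "\<not> carrier G \<subseteq> ?K"
      using Kab nonab group_comm_groupI by blast
    then show ?thesis
      using that by auto
  qed
  note xo = outside_element_inverts[OF sc R2 abelN x]
  obtain n where n: "n \<in> non_involutions G"
    using non_involutions_nonempty[OF nonab] by auto
  have nK: "n \<in> ?K" and nc: "n \<in> carrier G" "n \<otimes> n \<noteq> \<one>"
    using n by (auto simp: non_involutions_iff intro: generate.incl)
  have gx: "generate G {x} = {\<one>, x}"
    by (rule generate_involution[OF x(1) xo(1)])
  have inter: "?K \<inter> generate G {x} = {\<one>}"
    using gx x generate.one[of G "non_involutions G"] by auto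
  have prod: "?K <#> generate G {x} = carrier G"
    unfolding gx using outside_product_inside[OF sc R2 abelN n x]
    by (intro involution_coset_cover[OF Ksub x(1) xo(1)]) blast
  have R22: "\<forall>r1 r2 :: 'r. 2 * r1 = 0 \<and> 2 * r2 = 0 \<longrightarrow> r1 * r2 = 0"
    using R2_square_zero[OF sc x(1) xo(1) nc] xo(2) nK by blast
  show ?thesis
    unfolding semidirect_inversion_cond_def Let_def
    using Kab x xo non_involutions_generate_normal inter prod R22 by blast
qed

text \<open>Forward direction when two non-involutions \<open>g\<^sub>0, h\<^sub>0\<close> do not commute. Then every
  non-involution squares to \<open>z = g\<^sub>0\<^sup>2\<close>, \<open>z\<close> is a central involution, all commutators lie in
  \<open>{1, z}\<close> and condition (2) follows.\<close>

context
  fixes R :: "'r::comm_ring_1 itself" and g0 h0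
  assumes sc: "skew_commutative G R" and char2: "CHAR('r) \<noteq> 2" and R2: "\<exists>r::'r. 2 * r = 0 \<and> r \<noteq> 0"
    and g0: "g0 \<in> carrier G" "g0 \<otimes> g0 \<noteq> \<one>" and h0: "h0 \<in> carrier G" "h0 \<otimes> h0 \<noteq> \<one>"
    and nc0: "g0 \<otimes> h0 \<noteq> h0 \<otimes> g0"
begin

lemma quaternion_pair:
  "CHAR('r) = 4 \<and> inv h0 \<otimes> (g0 \<otimes> h0) = inv g0 \<and> h0 \<otimes> h0 = g0 \<otimes> g0 \<and> g0 \<otimes> g0 \<otimes> (g0 \<otimes> g0) = \<one>"
  by (rule noncommuting_non_involutions[OF sc char2 R2 g0 h0 nc0])

lemma non_involution_square:
  assumes u: "u \<in> carrier G" "u \<otimes> u \<noteq> \<one>"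
  shows "u \<otimes> u = g0 \<otimes> g0"
proof -
  have z: "g0 \<otimes> g0 \<otimes> (g0 \<otimes> g0) = \<one>" "h0 \<otimes> h0 = g0 \<otimes> g0"
    using quaternion_pair by auto
  consider (g) "u \<otimes> g0 \<noteq> g0 \<otimes> u" | (h) "u \<otimes> h0 \<noteq> h0 \<otimes> u"
    | (both) "u \<otimes> g0 = g0 \<otimes> u" "u \<otimes> h0 = h0 \<otimes> u"
    by blast
  then show ?thesis
  proof cases
    case g
    then show ?thesis
      using noncommuting_non_involutions[OF sc char2 R2 u g0] by simp
  next
    case h
    then show ?thesis
      using noncommuting_non_involutions[OF sc char2 R2 u h0] z by simp
  next
    case both
    txt \<open>Then \<open>a = ug\<^sub>0\<close> does not commute with \<open>h\<^sub>0\<close> and \<open>a\<^sup>2 = u\<^sup>2z\<close>; if \<open>a\<close> were a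
      non-involution, \<open>a\<^sup>2 = h\<^sub>0\<^sup>2 = z\<close> would give \<open>u\<^sup>2 = 1\<close>.\<close>
    define a where "a = u \<otimes> g0"
    have a: "a \<in> carrier G"
      using u g0 by (simp add: a_def)
    have anc: "a \<otimes> h0 \<noteq> h0 \<otimes> a"
      using both nc0 u g0 h0 unfolding a_def by (metis m_assoc m_closed r_cancel)
    have aa: "a \<otimes> a = u \<otimes> u \<otimes> (g0 \<otimes> g0)"
      using both(1) u g0 unfolding a_def by (metis m_assoc m_closed)
    show ?thesis
    proof (cases "a \<otimes> a = \<one>")
      case True
      then show ?thesis
        using aa z u g0 by (metis m_closed r_cancel)
    next
      case False
      then have "u \<otimes> u \<otimes> (g0 \<otimes> g0) = \<one> \<otimes> (g0 \<otimes> g0)"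
        using noncommuting_non_involutions[OF sc char2 R2 a False h0 anc] aa z g0 by simp
      then have "u \<otimes> u = \<one>"
        using u g0 by (metis m_closed one_closed r_cancel)
      then show ?thesis
        using u(2) by contradiction
    qed
  qed
qed

lemma square_cases: "u \<in> carrier G \<Longrightarrow> u \<otimes> u = \<one> \<or> u \<otimes> u = g0 \<otimes> g0"
  using non_involution_square by blast

text \<open>\<open>z\<close> is central: \<open>uzu\<inverse>\<close> is the square of the non-involution \<open>ug\<^sub>0u\<inverse>\<close>, so equals \<open>z\<close>.\<close>

lemma square_central:
  assumes u: "u \<in> carrier G"
  shows "u \<otimes> (g0 \<otimes> g0) = (g0 \<otimes> g0) \<otimes> u"
proof -
  have "g0 \<in> non_involutions G"
    using g0 by (simp add: non_involutions_iff)
  then have "u \<otimes> g0 \<otimes> inv u \<in> non_involutions G"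
    using u by (rule conjugate_non_involution)
  then have "(u \<otimes> g0 \<otimes> inv u) \<otimes> (u \<otimes> g0 \<otimes> inv u) = g0 \<otimes> g0"
    by (intro non_involution_square) (simp_all add: non_involutions_iff)
  then have "u \<otimes> (g0 \<otimes> g0) \<otimes> inv u = g0 \<otimes> g0"
    using conjugate_square[OF u g0(1)] by simp
  then show ?thesis
    using u g0 by (metis inv_solve_right m_closed)
qed

text \<open>Squares being central, \<open>[a, b] = (ab)\<^sup>2a\<^sup>-\<^sup>2b\<^sup>-\<^sup>2\<close> lies in \<open>{1, z}\<close>; so \<open>G' = {1, z}\<close>, with
  \<open>z = [g\<^sub>0, h\<^sub>0]\<close>.\<close>

lemma commutator_cases:
  assumes a: "a \<in> carrier G" and b: "b \<in> carrier G"
  shows "a \<otimes> b \<otimes> inv a \<otimes> inv b \<in> {\<one>, g0 \<otimes> g0}"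
proof -
  have zz: "g0 \<otimes> g0 \<otimes> (g0 \<otimes> g0) = \<one>"
    using quaternion_pair by simp
  then have iz: "inv (g0 \<otimes> g0) = g0 \<otimes> g0"
    using g0 by (simp add: inv_equality)
  have "b \<otimes> (a \<otimes> a) = (a \<otimes> a) \<otimes> b"
    using square_cases[OF a] square_central[OF b] b by auto
  then have "a \<otimes> b \<otimes> inv a \<otimes> inv b = (a \<otimes> b) \<otimes> (a \<otimes> b) \<otimes> inv (a \<otimes> a) \<otimes> inv (b \<otimes> b)"
    by (rule commutator_via_squares[OF a b])
  then show ?thesis
    using square_cases[OF a] square_cases[OF b] square_cases[of "a \<otimes> b"] a b g0 zz iz by auto
qed

lemma derived_eq_pair: "derived G (carrier G) = {\<one>, g0 \<otimes> g0}"
proof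
  have zz: "g0 \<otimes> g0 \<otimes> (g0 \<otimes> g0) = \<one>"
    using quaternion_pair by simp
  have "subgroup {\<one>, g0 \<otimes> g0} G"
    using generate_involution[OF _ zz] g0 generate_is_subgroup[of "{g0 \<otimes> g0}"] by simp
  then show "derived G (carrier G) \<subseteq> {\<one>, g0 \<otimes> g0}"
    unfolding derived_def using commutator_cases by (intro generate_subgroup_incl) blast+
  have "g0 \<otimes> h0 \<otimes> inv g0 \<otimes> inv h0 = g0 \<otimes> g0"
    using commutator_cases[OF g0(1) h0(1)] commutator_eq_one_iff[OF g0(1) h0(1)] nc0 by blast
  then have "g0 \<otimes> g0 \<in> derived G (carrier G)"
    using commutator_in_derived[OF g0(1) h0(1)] by simp
  then show "{\<one>, g0 \<otimes> g0} \<subseteq> derived G (carrier G)"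
    unfolding derived_def by (auto intro: generate.one)
qed

lemma char4_forward: "char4_cond G R"
proof -
  let ?D = "derived G (carrier G)"
  have zz: "g0 \<otimes> g0 \<otimes> (g0 \<otimes> g0) = \<one>" and char4: "CHAR('r) = 4"
    using quaternion_pair by simp_all
  have "\<forall>u\<in>carrier G. u \<otimes> u \<otimes> (u \<otimes> u) = \<one>"
    using square_cases zz by fastforce
  then have exp4: "group_exponent G 4"
    using group_exponent_fourI g0 by blast
  have cyclic: "?D = generate G {g0 \<otimes> g0}"
    using derived_eq_pair generate_involution[OF _ zz] g0 by simp
  have card2: "card ?D = 2"
    using derived_eq_pair g0(2) by simp
  have quot: "\<forall>a\<in>carrier (G Mod ?D). a \<otimes>\<^bsub>G Mod ?D\<^esub> a = \<one>\<^bsub>G Mod ?D\<^esub>"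
    using quotient_exponent_two_iff[OF derived_self_is_normal] square_cases derived_eq_pair by blast
  have invc: "\<forall>a\<in>carrier G. \<forall>b\<in>carrier G. ord a = 2 \<and> ord b = 2 \<longrightarrow> a \<otimes> b = b \<otimes> a"
    if "\<exists>r1 r2 :: 'r. 2 * r1 = 0 \<and> 2 * r2 = 0 \<and> r1 * r2 \<noteq> 0"
    using that involutions_commute[OF sc] ord_two_iff by metis
  show ?thesis
    unfolding char4_cond_def using char4 exp4 cyclic g0 card2 quot invc by blast
qed

end

lemma skew_commutativeI:
  fixes R :: "'r::comm_ring_1 itself"
  assumes sums: "\<And>\<alpha> \<beta> x. \<alpha> \<in> grp_ring_skew G \<Longrightarrow> \<beta> \<in> grp_ring_skew G \<Longrightarrow> x \<in> carrier G \<Longrightarrow>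
     (\<Sum>y\<in>{g. \<alpha> g \<noteq> 0}. \<alpha> y * (\<beta> (inv y \<otimes> x) :: 'r)) = (\<Sum>y\<in>{g. \<alpha> g \<noteq> 0}. \<alpha> y * \<beta> (x \<otimes> inv y))"
  shows "skew_commutative G R"
  unfolding skew_commutative_def
proof (intro allI impI ext)
  fix \<alpha> \<beta> :: "'a \<Rightarrow> 'r" and x
  assume ab: "\<alpha> \<in> grp_ring_skew G \<and> \<beta> \<in> grp_ring_skew G"
  show "grp_ring_mult G \<alpha> \<beta> x = grp_ring_mult G \<beta> \<alpha> x"
  proof (cases "x \<in> carrier G")
    case True
    then have "grp_ring_mult G \<alpha> \<beta> x = (\<Sum>y\<in>{g. \<alpha> g \<noteq> 0}. \<alpha> y * \<beta> (inv y \<otimes> x))"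
      by (simp add: grp_ring_mult_def)
    also have "\<dots> = (\<Sum>y\<in>{g. \<alpha> g \<noteq> 0}. \<alpha> y * \<beta> (x \<otimes> inv y))"
      using sums ab True by blast
    also have "\<dots> = grp_ring_mult G \<beta> \<alpha> x"
      using grp_ring_mult_swapped[symmetric] ab skew_in_grp_ring True by blast
    finally show ?thesis .
  next
    case False
    then show ?thesis
      by (simp add: grp_ring_mult_def)
  qed
qed

text \<open>The two sums then agree term by term after substituting \<open>y \<mapsto> y\<inverse>\<close>
  for \<open>y \<in> K\<close> when \<open>x \<notin> K\<close>.\<close>

context
  fixes K :: "'a set" and R :: "'r::comm_ring_1 itself"
  assumes Ksg: "subgroup K G" and Kab: "\<And>a b. a \<in> K \<Longrightarrow> b \<in> K \<Longrightarrow> a \<otimes> b = b \<otimes> a"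
    and outside_sq: "\<And>u. u \<in> carrier G \<Longrightarrow> u \<notin> K \<Longrightarrow> u \<otimes> u = \<one>"
    and outside_inverts: "\<And>u k. u \<in> carrier G \<Longrightarrow> u \<notin> K \<Longrightarrow> k \<in> K \<Longrightarrow> u \<otimes> k = inv k \<otimes> u"
    and R22: "\<And>r1 r2 :: 'r. 2 * r1 = 0 \<Longrightarrow> 2 * r2 = 0 \<Longrightarrow> r1 * r2 = 0"
begin

lemma inside_times_outside:
  assumes k: "k \<in> K" and u: "u \<in> carrier G" "u \<notin> K"
  shows "k \<otimes> u \<notin> K" "u \<otimes> k \<notin> K"
proof -
  have kc: "k \<in> carrier G"
    using k subgroup.mem_carrier[OF Ksg] by blast
  show "k \<otimes> u \<notin> K"
  proof
    assume "k \<otimes> u \<in> K"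
    then have "inv k \<otimes> (k \<otimes> u) \<in> K"
      using k subgroup.m_inv_closed[OF Ksg] subgroup.m_closed[OF Ksg] by blast
    then show False
      using u kc by simp
  qed
  show "u \<otimes> k \<notin> K"
  proof
    assume "u \<otimes> k \<in> K"
    then have "u \<otimes> k \<otimes> inv k \<in> K"
      using k subgroup.m_inv_closed[OF Ksg] subgroup.m_closed[OF Ksg] by blast
    then show False
      using u kc by (simp add: m_assoc)
  qed
qed

lemma skew_outside:
  fixes \<alpha> :: "'a \<Rightarrow> 'r"
  assumes "\<alpha> \<in> grp_ring_skew G" "u \<in> carrier G" "u \<notin> K"
  shows "2 * \<alpha> u = 0"
  using skew_at_involution outside_sq assms by blast

lemma semidirect_term:
  fixes \<alpha> \<beta> :: "'a \<Rightarrow> 'r"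
  assumes a: "\<alpha> \<in> grp_ring_skew G" and b: "\<beta> \<in> grp_ring_skew G"
    and x: "x \<in> carrier G" and y: "y \<in> carrier G"
  shows "\<alpha> y * \<beta> (inv y \<otimes> x) =
     \<alpha> (if y \<in> K \<and> x \<notin> K then inv y else y) * \<beta> (x \<otimes> inv (if y \<in> K \<and> x \<notin> K then inv y else y))"
proof -
  have Kinv: "inv y \<in> K \<longleftrightarrow> y \<in> K"
    using subgroup.m_inv_closed[OF Ksg] y by (metis inv_inv)
  consider (KK) "y \<in> K" "x \<in> K" | (KO) "y \<in> K" "x \<notin> K" | (OK) "y \<notin> K" "x \<in> K" | (OO) "y \<notin> K" "x \<notin> K"
    by blast
  then show ?thesis
  proof cases
    case KK
    then show ?thesis
      using Kab subgroup.m_inv_closed[OF Ksg] by simp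
  next
    case KO
    txt \<open>\<open>x\<close> inverts \<open>y\<close>, and \<open>\<beta>(y\<inverse>x) \<in> R\<^sub>2\<close> because \<open>y\<inverse>x \<notin> K\<close>.\<close>
    have "2 * \<beta> (inv y \<otimes> x) = 0"
      using skew_outside[OF b] inside_times_outside(1)[of "inv y" x] KO Kinv x y by simp
    then have neg: "- \<beta> (inv y \<otimes> x) = \<beta> (inv y \<otimes> x)"
      using two_torsion_iff_self_negative by blast
    have "x \<otimes> y = inv y \<otimes> x"
      using outside_inverts KO x by simp
    then have "\<alpha> (inv y) * \<beta> (x \<otimes> inv (inv y)) = \<alpha> y * (- \<beta> (inv y \<otimes> x))"
      using y skew_inv[OF a y] by simp
    also have "\<dots> = \<alpha> y * \<beta> (inv y \<otimes> x)"
      by (simp only: neg)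
    finally show ?thesis
      using KO by simp
  next
    case OK
    txt \<open>Both terms are products of two elements of \<open>R\<^sub>2\<close>.\<close>
    have "2 * \<alpha> y = 0" "2 * \<beta> (inv y \<otimes> x) = 0" "2 * \<beta> (x \<otimes> inv y) = 0"
      using skew_outside[OF a y] skew_outside[OF b] inside_times_outside[of x "inv y"] OK Kinv x y
      by (simp_all add: inv_mult_group)
    then show ?thesis
      using OK R22 by simp
  next
    case OO
    txt \<open>Now \<open>x, y\<close> are involutions, so \<open>xy\<inverse> = (y\<inverse>x)\<inverse>\<close> and \<open>\<alpha>(y) \<in> R\<^sub>2\<close>.\<close>
    have "inv x = x" "inv y = y"
      using OO outside_sq x y by (simp_all add: inv_equality)
    then have "x \<otimes> inv y = inv (inv y \<otimes> x)"
      using x y by (simp add: inv_mult_group)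
    then have "\<alpha> y * \<beta> (x \<otimes> inv y) = - \<alpha> y * \<beta> (inv y \<otimes> x)"
      using skew_inv[OF b] x y by simp
    also have "- \<alpha> y = \<alpha> y"
      using skew_outside[OF a y] OO two_torsion_iff_self_negative by blast
    finally show ?thesis
      using OO by simp
  qed
qed

lemma semidirect_backward: "skew_commutative G R"
proof (rule skew_commutativeI)
  fix \<alpha> \<beta> :: "'a \<Rightarrow> 'r" and x
  assume a: "\<alpha> \<in> grp_ring_skew G" and b: "\<beta> \<in> grp_ring_skew G" and x: "x \<in> carrier G"
  let ?A = "{g. \<alpha> g \<noteq> 0}"
  let ?\<psi> = "\<lambda>y. if y \<in> K \<and> x \<notin> K then inv y else y"
  have A: "?A \<subseteq> carrier G"
    using a by (auto simp: grp_ring_skew_def grp_ring_def)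
  have Kinv: "inv y \<in> K \<longleftrightarrow> y \<in> K" if "y \<in> carrier G" for y
    using subgroup.m_inv_closed[OF Ksg] that by (metis inv_inv)
  have involutive: "?\<psi> (?\<psi> y) = y" if "y \<in> ?A" for y
    using that A Kinv by auto
  have closed: "?\<psi> y \<in> ?A" if "y \<in> ?A" for y
    using that A skew_inv[OF a] by auto
  show "(\<Sum>y\<in>?A. \<alpha> y * \<beta> (inv y \<otimes> x)) = (\<Sum>y\<in>?A. \<alpha> y * \<beta> (x \<otimes> inv y))"
    by (rule sum.reindex_bij_witness[of _ ?\<psi> ?\<psi>])
      (use involutive closed semidirect_term[OF a b x] A in auto)
qed

end

text \<open>The summands
  for \<open>y\<close> and \<open>yz\<close> then cancel in pairs.\<close>

context
  fixes z :: 'a and R :: "'r::comm_ring_1 itself"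
  assumes z: "z \<in> carrier G" "z \<otimes> z = \<one>" "z \<noteq> \<one>"
    and z_central: "\<And>u. u \<in> carrier G \<Longrightarrow> u \<otimes> z = z \<otimes> u"
    and squares: "\<And>u. u \<in> carrier G \<Longrightarrow> u \<otimes> u = \<one> \<or> u \<otimes> u = z"
    and commute_mod_z: "\<And>a b. a \<in> carrier G \<Longrightarrow> b \<in> carrier G \<Longrightarrow> a \<otimes> b = b \<otimes> a \<or> a \<otimes> b = b \<otimes> a \<otimes> z"
    and four: "(4::'r) = 0"
    and involutions_commute_R2: "\<And>(r1::'r) r2 a b. 2 * r1 = 0 \<Longrightarrow> 2 * r2 = 0 \<Longrightarrow> r1 * r2 \<noteq> 0 \<Longrightarrow>
       a \<in> carrier G \<Longrightarrow> b \<in> carrier G \<Longrightarrow> a \<otimes> a = \<one> \<Longrightarrow> b \<otimes> b = \<one> \<Longrightarrow> a \<noteq> \<one> \<Longrightarrow> b \<noteq> \<one> \<Longrightarrow>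
       a \<otimes> b = b \<otimes> a"
begin

text \<open>The difference \<open>\<alpha>(y) - \<alpha>(yz)\<close> of a skew element always lies in \<open>R\<^sub>2\<close>; when \<open>y\<^sup>2 = z\<close> it
  equals \<open>2\<alpha>(y)\<close>, since then \<open>yz = y\<inverse>\<close>.\<close>

lemma skew_difference_double:
  fixes \<alpha> :: "'a \<Rightarrow> 'r"
  assumes a: "\<alpha> \<in> grp_ring_skew G" and y: "y \<in> carrier G" "y \<otimes> y = z"
  shows "\<alpha> y - \<alpha> (y \<otimes> z) = 2 * \<alpha> y"
proof -
  have "y \<otimes> z \<otimes> y = \<one>"
    using y z z_central[OF y(1)] by (metis m_assoc)
  then have "inv y = y \<otimes> z"
    using y z by (simp add: inv_equality)
  then have "\<alpha> (y \<otimes> z) = - \<alpha> y"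
    using skew_inv[OF a y(1)] by simp
  then show ?thesis
    by (metis diff_minus_eq_add mult_2)
qed

lemma skew_difference_torsion:
  fixes \<alpha> :: "'a \<Rightarrow> 'r"
  assumes a: "\<alpha> \<in> grp_ring_skew G" and y: "y \<in> carrier G"
  shows "2 * (\<alpha> y - \<alpha> (y \<otimes> z)) = 0"
proof (cases "y \<otimes> y = z")
  case True
  have "2 * (\<alpha> y - \<alpha> (y \<otimes> z)) = 2 * (2 * \<alpha> y)"
    by (simp only: skew_difference_double[OF a y True])
  also have "\<dots> = 4 * \<alpha> y"
    by simp
  also have "\<dots> = 0"
    using four by simp
  finally show ?thesis .
next
  case False
  then have yy: "y \<otimes> y = \<one>"
    using squares[OF y] by blast
  have "(y \<otimes> z) \<otimes> (y \<otimes> z) = \<one>"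
    using yy y z z_central[OF y] by (metis m_assoc m_closed r_one)
  then show ?thesis
    using skew_at_involution[OF a] y yy z by (simp add: right_diff_distrib)
qed

text \<open>If \<open>y\<inverse>x \<noteq> xy\<inverse>\<close>, the product of the differences attached to \<open>y\<close> and \<open>w = y\<inverse>x\<close> vanishes:
  both lie in \<open>R\<^sub>2\<close>, a square \<open>y\<^sup>2 = z\<close> or \<open>w\<^sup>2 = z\<close> makes one of them a multiple of 2, and
  otherwise \<open>y, w\<close> are involutions which do not commute.\<close>

lemma difference_product_zero:
  fixes \<alpha> \<beta> :: "'a \<Rightarrow> 'r"
  assumes a: "\<alpha> \<in> grp_ring_skew G" and b: "\<beta> \<in> grp_ring_skew G"
    and x: "x \<in> carrier G" and y: "y \<in> carrier G" and ne: "inv y \<otimes> x \<noteq> x \<otimes> inv y"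
  shows "(\<alpha> y - \<alpha> (y \<otimes> z)) * (\<beta> (inv y \<otimes> x) - \<beta> (inv y \<otimes> x \<otimes> z)) = 0"
proof (rule ccontr)
  define w where "w = inv y \<otimes> x"
  define dA where "dA = \<alpha> y - \<alpha> (y \<otimes> z)"
  define dB where "dB = \<beta> w - \<beta> (w \<otimes> z)"
  assume "(\<alpha> y - \<alpha> (y \<otimes> z)) * (\<beta> (inv y \<otimes> x) - \<beta> (inv y \<otimes> x \<otimes> z)) \<noteq> 0"
  then have nz: "dA * dB \<noteq> 0"
    by (simp add: dA_def dB_def w_def)
  have wc: "w \<in> carrier G"
    using x y by (simp add: w_def)
  have tA: "2 * dA = 0" and tB: "2 * dB = 0"
    unfolding dA_def dB_def using skew_difference_torsion a b y wc by blast+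
  have "y \<otimes> y \<noteq> z"
  proof
    assume "y \<otimes> y = z"
    then have "dA = 2 * \<alpha> y"
      using skew_difference_double[OF a y] by (simp add: dA_def)
    then have "dA * dB = \<alpha> y * (2 * dB)"
      by (simp add: mult_ac)
    then show False
      using nz tB by simp
  qed
  then have yy: "y \<otimes> y = \<one>"
    using squares[OF y] by blast
  have "w \<otimes> w \<noteq> z"
  proof
    assume "w \<otimes> w = z"
    then have "dB = 2 * \<beta> w"
      using skew_difference_double[OF b wc] by (simp add: dB_def)
    then have "dA * dB = (2 * dA) * \<beta> w"
      by (simp add: mult_ac)
    then show False
      using nz tA by simp
  qed
  then have ww: "w \<otimes> w = \<one>"
    using squares[OF wc] by blast
  have iy: "inv y = y"
    using yy y by (simp add: inv_equality)
  have "y \<noteq> \<one>"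
    using ne x by auto
  moreover have "w \<noteq> \<one>"
  proof
    assume "w = \<one>"
    then have "x \<otimes> inv y = \<one>"
      using x y inv_comm[of "inv y" x] by (simp add: w_def)
    then show False
      using ne \<open>w = \<one>\<close> by (simp add: w_def)
  qed
  ultimately have "y \<otimes> w = w \<otimes> y"
    using involutions_commute_R2[OF tA tB nz y wc yy ww] by blast
  then show False
    using ne x y iy by (simp add: w_def m_assoc)
qed

text \<open>The summands for \<open>y\<close> and \<open>yz\<close> of \<open>\<Sum>\<^sub>y \<alpha>(y)(\<beta>(y\<inverse>x) - \<beta>(xy\<inverse>))\<close> cancel: either
  \<open>y\<inverse>x = xy\<inverse>\<close>, or their sum is the product of differences above.\<close>

lemma char4_term_pair:
  fixes \<alpha> \<beta> :: "'a \<Rightarrow> 'r"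
  assumes a: "\<alpha> \<in> grp_ring_skew G" and b: "\<beta> \<in> grp_ring_skew G"
    and x: "x \<in> carrier G" and y: "y \<in> carrier G"
  shows "\<alpha> y * (\<beta> (inv y \<otimes> x) - \<beta> (x \<otimes> inv y)) +
         \<alpha> (y \<otimes> z) * (\<beta> (inv (y \<otimes> z) \<otimes> x) - \<beta> (x \<otimes> inv (y \<otimes> z))) = 0"
proof -
  define w where "w = inv y \<otimes> x"
  define w' where "w' = x \<otimes> inv y"
  have wc: "w \<in> carrier G" "w' \<in> carrier G"
    using x y by (simp_all add: w_def w'_def)
  have iz: "inv z = z"
    using z by (simp add: inv_equality)
  have "inv (y \<otimes> z) = inv y \<otimes> z"
    using y z z_central[of "inv y"] iz by (simp add: inv_mult_group)
  then have shift: "inv (y \<otimes> z) \<otimes> x = w \<otimes> z" "x \<otimes> inv (y \<otimes> z) = w' \<otimes> z"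
    using x y z z_central[OF x] by (simp_all add: w_def w'_def m_assoc)
  consider (eq) "w = w'" | (ne) "w = w' \<otimes> z"
    using commute_mod_z[of "inv y" x] x y unfolding w_def w'_def by blast
  then show ?thesis
  proof cases
    case eq
    then show ?thesis
      using shift by (simp add: w_def w'_def)
  next
    case ne
    then have "w' = w \<otimes> z" "w' \<otimes> z = w"
      using wc z by (simp_all add: m_assoc)
    moreover have "w \<noteq> w'"
      using ne wc z l_cancel_one[of w' z] by auto
    ultimately have "\<alpha> y * (\<beta> (inv y \<otimes> x) - \<beta> (x \<otimes> inv y)) +
         \<alpha> (y \<otimes> z) * (\<beta> (inv (y \<otimes> z) \<otimes> x) - \<beta> (x \<otimes> inv (y \<otimes> z))) =
       (\<alpha> y - \<alpha> (y \<otimes> z)) * (\<beta> (inv y \<otimes> x) - \<beta> (inv y \<otimes> x \<otimes> z))"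
      using shift by (simp add: w_def w'_def algebra_simps)
    also have "\<dots> = 0"
      using difference_product_zero[OF a b x y] \<open>w \<noteq> w'\<close> by (simp add: w_def w'_def)
    finally show ?thesis .
  qed
qed

lemma char4_backward: "skew_commutative G R"
proof (rule skew_commutativeI)
  fix \<alpha> \<beta> :: "'a \<Rightarrow> 'r" and x
  assume a: "\<alpha> \<in> grp_ring_skew G" and b: "\<beta> \<in> grp_ring_skew G" and x: "x \<in> carrier G"
  let ?A = "{g. \<alpha> g \<noteq> 0}"
  let ?F = "?A \<union> (\<lambda>y. y \<otimes> z) ` ?A"
  let ?D = "\<lambda>y. \<alpha> y * (\<beta> (inv y \<otimes> x) - \<beta> (x \<otimes> inv y))"
  have A: "finite ?A" "?A \<subseteq> carrier G"
    using a by (auto simp: grp_ring_skew_def grp_ring_def)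
  have F: "?F \<subseteq> carrier G"
    using A z by auto
  have zz: "y \<otimes> z \<otimes> z = y" if "y \<in> carrier G" for y
    using that z by (simp add: m_assoc)
  have "(\<Sum>y\<in>?A. \<alpha> y * \<beta> (inv y \<otimes> x)) - (\<Sum>y\<in>?A. \<alpha> y * \<beta> (x \<otimes> inv y)) = (\<Sum>y\<in>?A. ?D y)"
    by (simp add: sum_subtractf right_diff_distrib)
  also have "\<dots> = (\<Sum>y\<in>?F. ?D y)"
    by (rule sum.mono_neutral_left) (use A in auto)
  also have "\<dots> = 0"
  proof (rule sum_involution_eq_0[where h = "\<lambda>y. y \<otimes> z"])
    fix y
    assume y: "y \<in> ?F"
    then have yc: "y \<in> carrier G"
      using F by auto
    show "?D (y \<otimes> z) + ?D y = 0"
      using char4_term_pair[OF a b x yc] by (simp add: add.commute)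
    show "y \<otimes> z \<otimes> z = y"
      using zz[OF yc] .
    show "y \<otimes> z \<in> ?F"
    proof (cases "y \<in> ?A")
      case True
      then show ?thesis by blast
    next
      case False
      then obtain u where "u \<in> ?A" "y = u \<otimes> z"
        using y by blast
      then show ?thesis
        using A zz by auto
    qed
    show "y \<otimes> z \<noteq> y"
      using yc z l_cancel_one[of y z] by simp
  qed
  finally show "(\<Sum>y\<in>?A. \<alpha> y * \<beta> (inv y \<otimes> x)) = (\<Sum>y\<in>?A. \<alpha> y * \<beta> (x \<otimes> inv y))"
    by simp
qed

end

lemma semidirect_cond_backward:
  fixes R :: "'r::comm_ring_1 itself"
  assumes cond: "semidirect_inversion_cond G R"
  shows "skew_commutative G R"
proof -
  let ?K = "generate G (non_involutions G)"
  obtain x where x: "x \<in> carrier G" "x \<otimes> x = \<one>" "?K <#> generate G {x} = carrier G"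
    "\<forall>k\<in>?K. x \<otimes> k \<otimes> x = inv k"
    and Kab: "\<forall>a\<in>?K. \<forall>b\<in>?K. a \<otimes> b = b \<otimes> a"
    and R22: "\<forall>r1 r2 :: 'r. 2 * r1 = 0 \<and> 2 * r2 = 0 \<longrightarrow> r1 * r2 = 0"
    using cond unfolding semidirect_inversion_cond_def Let_def by blast
  have Ksg: "subgroup ?K G"
    by (rule generate_is_subgroup[OF non_involutions_subset])
  have outside_sq: "u \<otimes> u = \<one>" if "u \<in> carrier G" "u \<notin> ?K" for u
    using that generate.incl[of u "non_involutions G" G] by (auto simp: non_involutions_iff)
  txt \<open>An element outside \<open>K\<close> has the form \<open>k\<^sub>0x\<close> with \<open>k\<^sub>0 \<in> K\<close>, and so inverts \<open>K\<close> like \<open>x\<close>.\<close>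
  have outside_inverts: "u \<otimes> k = inv k \<otimes> u" if u: "u \<in> carrier G" "u \<notin> ?K" and k: "k \<in> ?K" for u k
  proof -
    obtain k0 c where k0: "k0 \<in> ?K" and c: "c \<in> {\<one>, x}" and uk0: "u = k0 \<otimes> c"
      using x(3) u(1) generate_involution[OF x(1,2)] unfolding set_mult_def by blast
    have carr: "k0 \<in> carrier G" "k \<in> carrier G" "inv k \<in> ?K"
      using k0 k generate_in_carrier[OF non_involutions_subset] subgroup.m_inv_closed[OF Ksg] by auto
    have "c = x"
      using c uk0 u k0 carr by auto
    moreover have "x \<otimes> k = inv k \<otimes> x"
      using x(1,2,4) k carr by (metis inv_solve_right m_assoc m_closed r_one)
    moreover have "k0 \<otimes> inv k = inv k \<otimes> k0"
      using Kab k0 carr by blast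
    ultimately show ?thesis
      using uk0 x(1) carr by (metis inv_closed m_assoc)
  qed
  show ?thesis
    using semidirect_backward[OF Ksg _ outside_sq outside_inverts] Kab R22 by blast
qed

lemma char4_cond_backward:
  fixes R :: "'r::comm_ring_1 itself"
  assumes cond: "char4_cond G R"
  shows "skew_commutative G R"
proof -
  let ?D = "derived G (carrier G)"
  obtain c where c: "c \<in> carrier G" "?D = generate G {c}"
    and card2: "card ?D = 2" and char4: "CHAR('r) = 4"
    and quot: "\<forall>a\<in>carrier (G Mod ?D). a \<otimes>\<^bsub>G Mod ?D\<^esub> a = \<one>\<^bsub>G Mod ?D\<^esub>"
    and invc: "(\<exists>r1 r2 :: 'r. 2 * r1 = 0 \<and> 2 * r2 = 0 \<and> r1 * r2 \<noteq> 0) \<longrightarrow>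
         (\<forall>a\<in>carrier G. \<forall>b\<in>carrier G. ord a = 2 \<and> ord b = 2 \<longrightarrow> a \<otimes> b = b \<otimes> a)"
    using cond unfolding char4_cond_def by blast
  have "of_nat CHAR('r) = (0::'r)"
    by simp
  then have four: "(4::'r) = 0"
    using char4 by simp
  have c1: "c \<noteq> \<one>"
  proof
    assume "c = \<one>"
    then have "?D = {\<one>}"
      using c(2) generate_one by simp
    then show False
      using card2 by simp
  qed
  have cD: "c \<in> ?D"
    using c(2) by (auto intro: generate.incl)
  note D = normal_order_two[OF derived_self_is_normal card2 cD c1]
  have squares: "u \<otimes> u = \<one> \<or> u \<otimes> u = c" if "u \<in> carrier G" for u
  proof -
    have "u \<otimes> u \<in> ?D"
      using quot quotient_exponent_two_iff[OF derived_self_is_normal] that by blast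
    then show ?thesis
      using D(1) by blast
  qed
  have commute_mod_c: "a \<otimes> b = b \<otimes> a \<or> a \<otimes> b = b \<otimes> a \<otimes> c"
    if a: "a \<in> carrier G" and b: "b \<in> carrier G" for a b
  proof -
    have "a \<otimes> b = (a \<otimes> b \<otimes> inv a \<otimes> inv b) \<otimes> (b \<otimes> a)"
      using a b by (simp add: m_assoc)
    moreover have "a \<otimes> b \<otimes> inv a \<otimes> inv b \<in> {\<one>, c}"
      using commutator_in_derived[OF a b] D(1) by simp
    ultimately show ?thesis
      using a b D(3)[of "b \<otimes> a"] by auto
  qed
  have involutions_commute_R2: "a \<otimes> b = b \<otimes> a"
    if "2 * r1 = 0" "2 * r2 = 0" "r1 * r2 \<noteq> (0::'r)" "a \<in> carrier G" "b \<in> carrier G"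
      "a \<otimes> a = \<one>" "b \<otimes> b = \<one>" "a \<noteq> \<one>" "b \<noteq> \<one>" for r1 r2 a b
    using that invc ord_two_iff by blast
  show ?thesis
    by (rule char4_backward[OF c(1) D(2) c1 D(3) squares commute_mod_c four involutions_commute_R2])
qed

lemma skew_commutative_iff:
  fixes R :: "'r::comm_ring_1 itself"
  assumes char2: "CHAR('r) \<noteq> 2" and R2: "\<exists>r::'r. 2 * r = 0 \<and> r \<noteq> 0"
    and nonab: "\<not> comm_group G"
  shows "skew_commutative G R \<longleftrightarrow> semidirect_inversion_cond G R \<or> char4_cond G R"
proof
  assume sc: "skew_commutative G R"
  show "semidirect_inversion_cond G R \<or> char4_cond G R"
  proof (cases "\<forall>a\<in>non_involutions G. \<forall>b\<in>non_involutions G. a \<otimes> b = b \<otimes> a")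
    case True
    then show ?thesis
      using semidirect_forward[OF sc R2 nonab] by blast
  next
    case False
    then obtain g h where "g \<in> carrier G" "g \<otimes> g \<noteq> \<one>" "h \<in> carrier G" "h \<otimes> h \<noteq> \<one>"
      "g \<otimes> h \<noteq> h \<otimes> g"
      by (auto simp: non_involutions_iff)
    then show ?thesis
      using char4_forward[OF sc char2 R2] by blast
  qed
qed (use semidirect_cond_backward char4_cond_backward in blast)

end

theorem corollary2p6:
  fixes G :: "('g, 'm) monoid_scheme"
    and R :: "'r::comm_ring_1 itself"
  assumes grp: "group G"
    and char2: "CHAR('r) \<noteq> 2"
    and R2: "\<exists>r::'r. 2 * r = 0 \<and> r \<noteq> 0"
    and nonab: "\<not> comm_group G"
  shows "(\<forall>\<alpha> \<beta> :: 'g \<Rightarrow> 'r. \<alpha> \<in> grp_ring_skew G \<and> \<beta> \<in> grp_ring_skew G \<longrightarrow>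
            grp_ring_mult G \<alpha> \<beta> = grp_ring_mult G \<beta> \<alpha>)
    \<longleftrightarrow>
    ((let K = generate G {g \<in> carrier G. g [^]\<^bsub>G\<^esub> (2::nat) \<noteq> \<one>\<^bsub>G\<^esub>} in
        (\<forall>a\<in>K. \<forall>b\<in>K. a \<otimes>\<^bsub>G\<^esub> b = b \<otimes>\<^bsub>G\<^esub> a) \<and>
        (\<exists>x\<in>carrier G. x \<otimes>\<^bsub>G\<^esub> x = \<one>\<^bsub>G\<^esub> \<and>
           K \<lhd> G \<and>
           K \<inter> generate G {x} = {\<one>\<^bsub>G\<^esub>} \<and>
           K <#>\<^bsub>G\<^esub> generate G {x} = carrier G \<and>
           (\<forall>k\<in>K. x \<otimes>\<^bsub>G\<^esub> k \<otimes>\<^bsub>G\<^esub> x = inv\<^bsub>G\<^esub> k)) \<and>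
        (\<forall>r1 r2 :: 'r. 2 * r1 = 0 \<and> 2 * r2 = 0 \<longrightarrow> r1 * r2 = 0))
     \<or>
     (CHAR('r) = 4 \<and> group_exponent G 4 \<and>
      (\<exists>c\<in>carrier G. derived G (carrier G) = generate G {c}) \<and>
      card (derived G (carrier G)) = 2 \<and>
      (\<forall>a\<in>carrier (G Mod derived G (carrier G)).
          a \<otimes>\<^bsub>G Mod derived G (carrier G)\<^esub> a = \<one>\<^bsub>G Mod derived G (carrier G)\<^esub>) \<and>
      ((\<exists>r1 r2 :: 'r. 2 * r1 = 0 \<and> 2 * r2 = 0 \<and> r1 * r2 \<noteq> 0) \<longrightarrow>
         (\<forall>a\<in>carrier G. \<forall>b\<in>carrier G. group.ord G a = 2 \<and> group.ord G b = 2 \<longrightarrow>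
            a \<otimes>\<^bsub>G\<^esub> b = b \<otimes>\<^bsub>G\<^esub> a))))"
  using group.skew_commutative_iff[OF grp char2 R2 nonab]
  unfolding skew_commutative_def semidirect_inversion_cond_def char4_cond_def non_involutions_def .

end
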